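(* There exists a constant $c>0$ depending only on $p$ and $q$ (independent of $K$ and $\sigma$; one may take $c=(q/p)^{1/(p-q)}$) such that for every $\sigma^2>0$, every $K\in(0,\infty]$ and every $W\in X_K$, $W\ne0$, solving $\sigma^2W+\mathcal{A}\Psi_q(\mathcal{A}W)=\mathcal{A}\Psi_p(\mathcal{A}W)$, one has $\|\mathcal{A}W\|_{\infty,I_K}\ge c$.
   Context: Fix $p>2$, $1<q<p$. For $K\in(0,\infty)$, $I_K=(-K,K]$ with functions identified with $2K$-periodic functions on $\mathbb{R}$; $I_\infty=\mathbb{R}$; $\|\cdot\|_{r,I_K}$ is the $L^r$ norm over $I_K$. $(\mathcal{A}W)(\varphi)=\int_{\varphi-1/2}^{\varphi+1/2}W(s)\,ds$, $\Psi_r(w)=r\,\mathrm{sgn}(w)|w|^{r-1}$, and $X_K=\{W\in L^2(I_K):\mathcal{A}W\in L^q(I_K)\cap L^p(I_K)\}$. *)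

theory Defs
  imports "HOL-Probability.Probability"
begin

definition IK :: "ereal \<Rightarrow> real set" where
  "IK K = (if K = \<infinity> then UNIV else {- real_of_ereal K <.. real_of_ereal K})"

definition avgop :: "(real \<Rightarrow> real) \<Rightarrow> real \<Rightarrow> real" where
  "avgop W \<phi> = (LBINT s:{\<phi> - 1/2 .. \<phi> + 1/2}. W s)"

definition Psi :: "real \<Rightarrow> real \<Rightarrow> real" where
  "Psi r w = r * sgn w * \<bar>w\<bar> powr (r - 1)"

definition Lp_on :: "real \<Rightarrow> real set \<Rightarrow> (real \<Rightarrow> real) \<Rightarrow> bool" where
  "Lp_on r I f \<longleftrightarrow> f \<in> borel_measurable (restrict_space lborel I)
      \<and> integrable (restrict_space lborel I) (\<lambda>x. \<bar>f x\<bar> powr r)"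

definition XK :: "real \<Rightarrow> real \<Rightarrow> ereal \<Rightarrow> (real \<Rightarrow> real) \<Rightarrow> bool" where
  "XK p q K W \<longleftrightarrow> W \<in> borel_measurable lborel
      \<and> (K \<noteq> \<infinity> \<longrightarrow> (\<forall>x. W (x + 2 * real_of_ereal K) = W x))
      \<and> Lp_on 2 (IK K) W \<and> Lp_on q (IK K) (avgop W) \<and> Lp_on p (IK K) (avgop W)"

definition sup_norm_on :: "real set \<Rightarrow> (real \<Rightarrow> real) \<Rightarrow> ereal" where
  "sup_norm_on I f = esssup (restrict_space lborel I) (\<lambda>x. ereal \<bar>f x\<bar>)"

end

theory Submission
  imports Defs
begin

(* If |AW| <= c everywhere, then h = Psi_p(AW) - Psi_q(AW) satisfies
   h * AW <= 0 pointwise, while the equation says sigma^2 W = A h. As A is symmetric,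
   sigma^2 int W^2 = int W * A h = int h * AW <= 0, so W = 0. Since W is only square integrable,
   the symmetry of A is used on truncations (a, b], where it holds up to boundary terms controlled
   by the L^1 norm of W on [a - 1, a + 1] and [b - 1, b + 1]. On the line these windows move off
   to infinity and the boundary terms vanish; in the periodic case they stay bounded while the
   main term over n periods grows linearly in n. *)

section \<open>The averaging operator\<close>

lemma set_integrable_bounded_Icc:
  fixes f :: "real \<Rightarrow> real"
  assumes [measurable]: "f \<in> borel_measurable borel" and bound: "\<And>x. \<bar>f x\<bar> \<le> M"
  shows "set_integrable lborel {a..b} f"
proof (rule set_integrable_bound[of _ _ "\<lambda>_. M"])
  show "set_integrable lborel {a..b} (\<lambda>_. M)"
    by (simp add: borel_integrable_atLeastAtMost')
  show "AE x in lborel. x \<in> {a..b} \<longrightarrow> norm (f x) \<le> norm M"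
    using bound by (auto intro: order_trans[OF _ abs_ge_self])
qed (simp add: set_borel_measurable_def)

lemma avgop_eq_integral_indicator:
  "avgop W x = (\<integral>s. indicator {x - 1/2..x + 1/2} s * W s \<partial>lborel)"
  unfolding avgop_def set_lebesgue_integral_def by simp

lemma abs_avgop_le:
  fixes f :: "real \<Rightarrow> real"
  assumes [measurable]: "f \<in> borel_measurable borel" and bound: "\<And>x. \<bar>f x\<bar> \<le> M"
  shows "\<bar>avgop f x\<bar> \<le> M"
proof -
  have "\<bar>avgop f x\<bar> \<le> (\<integral>s. indicator {x - 1/2..x + 1/2} s * M \<partial>lborel)"
    unfolding avgop_eq_integral_indicator
  proof (rule integral_abs_bound_integral)
    show "integrable lborel (\<lambda>s. indicator {x - 1/2..x + 1/2} s * f s)"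
      using set_integrable_bounded_Icc[OF _ bound] by (simp add: set_integrable_def)
    show "integrable lborel (\<lambda>s. indicator {x - 1/2..x + 1/2} s * M)"
      using borel_integrable_atLeastAtMost'[of _ _ "\<lambda>_. M"] by (simp add: set_integrable_def)
    show "\<bar>indicator {x - 1/2..x + 1/2} s * f s\<bar> \<le> indicator {x - 1/2..x + 1/2} s * M" for s
      using bound[of s] by (simp split: split_indicator)
  qed
  also have "\<dots> = M"
    by (simp add: measure_def)
  finally show ?thesis .
qed

lemma continuous_on_avgop:
  fixes W :: "real \<Rightarrow> real"
  assumes W_int: "\<And>a b. set_integrable lborel {a..b} W"
  shows "continuous_on UNIV (avgop W)"
proof (rule continuous_at_imp_continuous_on, intro ballI)
  fix x0 :: real
  have W_int': "W integrable_on {a..b}" for a b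
    using set_borel_integral_eq_integral(1)[OF W_int] .
  define F where "F y = integral {x0 - 2..y} W" for y
  have F_cont: "continuous_on {x0 - 2..x0 + 2} F"
    unfolding F_def by (rule indefinite_integral_continuous_1[OF W_int'])
  have avgop_eq: "avgop W x = F (x + 1/2) - F (x - 1/2)" if "x \<in> {x0 - 1..x0 + 1}" for x
  proof -
    have "integral {x0 - 2..x - 1/2} W + integral {x - 1/2..x + 1/2} W = F (x + 1/2)"
      unfolding F_def by (rule Henstock_Kurzweil_Integration.integral_combine) (use that W_int' in auto)
    moreover have "avgop W x = integral {x - 1/2..x + 1/2} W"
      unfolding avgop_def by (rule set_borel_integral_eq_integral(2)[OF W_int])
    ultimately show ?thesis
      unfolding F_def by linarith
  qed
  have "continuous_on {x0 - 1..x0 + 1} (\<lambda>x. F (x + 1/2) - F (x - 1/2))"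
    by (intro continuous_on_diff continuous_on_compose2[OF F_cont] continuous_intros) auto
  then have "continuous_on {x0 - 1..x0 + 1} (avgop W)"
    by (rule continuous_on_eq) (use avgop_eq in auto)
  then show "isCont (avgop W) x0"
    by (rule continuous_on_interior) auto
qed

lemma avgop_borel_measurable [measurable]:
  fixes W :: "real \<Rightarrow> real"
  assumes "\<And>a b. set_integrable lborel {a..b} W"
  shows "avgop W \<in> borel_measurable borel"
  using continuous_on_avgop[OF assms] by (rule borel_measurable_continuous_onI)

lemma avgop_borel_measurable_bounded:
  fixes f :: "real \<Rightarrow> real"
  assumes "f \<in> borel_measurable borel" and "\<And>x. \<bar>f x\<bar> \<le> M"
  shows "avgop f \<in> borel_measurable borel"
  using set_integrable_bounded_Icc[OF assms] by (rule avgop_borel_measurable)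

lemma set_integrable_mult_avgop_bounded:
  fixes W h :: "real \<Rightarrow> real"
  assumes [measurable]: "W \<in> borel_measurable borel" "S \<in> sets borel"
    and W_int: "set_integrable lborel S W"
    and [measurable]: "h \<in> borel_measurable borel" and h_bound: "\<And>x. \<bar>h x\<bar> \<le> M"
  shows "set_integrable lborel S (\<lambda>x. W x * avgop h x)"
proof (rule set_integrable_bound[of _ _ "\<lambda>x. M * \<bar>W x\<bar>"])
  show "set_integrable lborel S (\<lambda>x. M * \<bar>W x\<bar>)"
    using set_integrable_abs[OF W_int] by (rule set_integrable_mult_right)
  have "\<bar>avgop h x\<bar> \<le> M" for x
    by (rule abs_avgop_le[OF _ h_bound]) simp
  then have "norm (W x * avgop h x) \<le> norm (M * \<bar>W x\<bar>)" for x
    using mult_left_mono[of "\<bar>avgop h x\<bar>" M "\<bar>W x\<bar>"] order_trans[OF abs_ge_zero h_bound]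
    by (simp add: abs_mult mult.commute)
  then show "AE x in lborel. x \<in> S \<longrightarrow> norm (W x * avgop h x) \<le> norm (M * \<bar>W x\<bar>)"
    by simp
  show "set_borel_measurable lborel S (\<lambda>x. W x * avgop h x)"
    using avgop_borel_measurable_bounded[OF _ h_bound] by (simp add: set_borel_measurable_def)
qed

lemma avgop_diff:
  fixes f g :: "real \<Rightarrow> real"
  assumes "\<And>a b. set_integrable lborel {a..b} f" and "\<And>a b. set_integrable lborel {a..b} g"
  shows "avgop (\<lambda>s. f s - g s) x = avgop f x - avgop g x"
  unfolding avgop_def using assms by (rule set_integral_diff)

lemma integrable_abs_mult_avgop_abs:
  fixes W f :: "real \<Rightarrow> real"
  assumes [measurable]: "W \<in> borel_measurable borel"
    and W_int: "\<And>a b. set_integrable lborel {a..b} W"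
    and [measurable]: "f \<in> borel_measurable borel" and f_bound: "\<And>x. \<bar>f x\<bar> \<le> M"
    and f_supp: "\<And>x. x \<notin> {a..b} \<Longrightarrow> f x = 0"
  shows "integrable lborel (\<lambda>x. \<bar>f x\<bar> * avgop (\<lambda>s. \<bar>W s\<bar>) x)"
proof -
  have abs_W_int: "set_integrable lborel {a..b} (\<lambda>s. \<bar>W s\<bar>)" for a b
    using W_int by (rule set_integrable_abs)
  note avgop_borel_measurable[OF abs_W_int, measurable]
  define C where "C = (LBINT s:{a - 1..b + 1}. \<bar>W s\<bar>)"
  have avgop_abs_W_le: "avgop (\<lambda>s. \<bar>W s\<bar>) x \<le> C" if "x \<in> {a..b}" for x
    unfolding avgop_eq_integral_indicator C_def set_lebesgue_integral_def
    using abs_W_int[of "x - 1/2" "x + 1/2"] abs_W_int[of "a - 1" "b + 1"] that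
    by (intro integral_mono) (auto simp: set_integrable_def split: split_indicator)
  show ?thesis
  proof (rule Bochner_Integration.integrable_bound)
    show "integrable lborel (\<lambda>x. indicator {a..b} x * (M * C))"
      using borel_integrable_atLeastAtMost'[of _ _ "\<lambda>_. M * C"] by (simp add: set_integrable_def)
    show "AE x in lborel. norm (\<bar>f x\<bar> * avgop (\<lambda>s. \<bar>W s\<bar>) x) \<le> norm (indicator {a..b} x * (M * C))"
    proof (rule AE_I2)
      fix x
      have avgop_nonneg: "0 \<le> avgop (\<lambda>s. \<bar>W s\<bar>) x"
        unfolding avgop_eq_integral_indicator by (rule integral_nonneg_AE) auto
      have "\<bar>f x\<bar> * avgop (\<lambda>s. \<bar>W s\<bar>) x \<le> M * C" if "x \<in> {a..b}"
        using f_bound[of x] avgop_abs_W_le[OF that] avgop_nonneg order_trans[OF abs_ge_zero f_bound]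
        by (intro mult_mono) auto
      then show "norm (\<bar>f x\<bar> * avgop (\<lambda>s. \<bar>W s\<bar>) x) \<le> norm (indicator {a..b} x * (M * C))"
        using f_supp[of x] avgop_nonneg abs_ge_self[of "M * C"]
        by (auto simp: abs_mult split: split_indicator)
    qed
  qed simp
qed

lemma avgop_adjoint_bounded_support:
  fixes W f :: "real \<Rightarrow> real"
  assumes [measurable]: "W \<in> borel_measurable borel"
    and W_int: "\<And>a b. set_integrable lborel {a..b} W"
    and [measurable]: "f \<in> borel_measurable borel" and f_bound: "\<And>x. \<bar>f x\<bar> \<le> M"
    and f_supp: "\<And>x. x \<notin> {a..b} \<Longrightarrow> f x = 0"
  shows "integrable lborel (\<lambda>s. W s * avgop f s)"
    and "(\<integral>s. W s * avgop f s \<partial>lborel) = (\<integral>x. f x * avgop W x \<partial>lborel)"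
proof -
  define G where "G x s = f x * (if \<bar>x - s\<bar> \<le> 1/2 then W s else 0)" for x s
  have G_measurable [measurable]: "(\<lambda>(x, s). G x s) \<in> borel_measurable (lborel \<Otimes>\<^sub>M lborel)"
    unfolding G_def by measurable
  have G_eq: "G x s = f x * (indicator {x - 1/2..x + 1/2} s * W s)" for x s
    unfolding G_def by (auto split: split_indicator abs_split)
  have window_swap: "indicator {x - 1/2..x + 1/2} s = (indicator {s - 1/2..s + 1/2} x :: real)" for x s :: real
    by (simp split: split_indicator)
  have G_int_snd: "(\<integral>s. G x s \<partial>lborel) = f x * avgop W x" for x
    unfolding G_eq avgop_eq_integral_indicator by (rule integral_mult_right_zero)
  have G_int_fst: "(\<integral>x. G x s \<partial>lborel) = W s * avgop f s" for s
    unfolding G_eq avgop_eq_integral_indicator window_swap[of _ s]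
    by (subst integral_mult_right_zero[symmetric]) (simp add: ac_simps)
  have "integrable (lborel \<Otimes>\<^sub>M lborel) (\<lambda>(x, s). G x s)"
  proof (rule lborel_pair.Fubini_integrable)
    show "AE x in lborel. integrable lborel (\<lambda>s. case (x, s) of (x, s) \<Rightarrow> G x s)"
      using W_int unfolding G_eq set_integrable_def by simp
    have "(\<integral>s. norm (G x s) \<partial>lborel) = \<bar>f x\<bar> * avgop (\<lambda>s. \<bar>W s\<bar>) x" for x
      unfolding G_eq avgop_eq_integral_indicator
      by (subst integral_mult_right_zero[symmetric]) (simp add: abs_mult)
    moreover note integrable_abs_mult_avgop_abs[where a = a and b = b, OF _ W_int _ f_bound f_supp]
    ultimately show "integrable lborel (\<lambda>x. \<integral>s. norm (case (x, s) of (x, s) \<Rightarrow> G x s) \<partial>lborel)"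
      by simp
  qed simp
  from lborel_pair.integrable_snd[OF this] lborel_pair.Fubini_integral[OF this]
  show "integrable lborel (\<lambda>s. W s * avgop f s)"
    and "(\<integral>s. W s * avgop f s \<partial>lborel) = (\<integral>x. f x * avgop W x \<partial>lborel)"
    by (simp_all add: G_int_snd G_int_fst)
qed

lemma abs_avgop_restrict_Ioc_le:
  fixes f :: "real \<Rightarrow> real"
  assumes [measurable]: "f \<in> borel_measurable borel" and f_bound: "\<And>x. \<bar>f x\<bar> \<le> M"
  shows "\<bar>indicator {a<..b} s * avgop f s - avgop (\<lambda>x. indicator {a<..b} x * f x) s\<bar>
           \<le> 2 * M * (indicator {a - 1..a + 1} s + indicator {b - 1..b + 1} s)"
proof -
  have M_nonneg: "0 \<le> M"
    using order_trans[OF abs_ge_zero f_bound] .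
  have restrict_bound: "\<bar>indicator {a<..b} x * f x\<bar> \<le> M" for x
    using f_bound[of x] M_nonneg by (simp split: split_indicator)
  consider (inside) "a + 1/2 < s \<and> s \<le> b - 1/2" | (outside) "s < a - 1/2 \<or> b + 1/2 < s"
    | (boundary) "s \<in> {a - 1..a + 1} \<or> s \<in> {b - 1..b + 1}"
    by force
  then show ?thesis
  proof cases
    case inside
    have "avgop (\<lambda>x. indicator {a<..b} x * f x) s = avgop f s"
      unfolding avgop_eq_integral_indicator
      by (rule Bochner_Integration.integral_cong) (use inside in \<open>auto split: split_indicator\<close>)
    then show ?thesis
      using inside M_nonneg by simp
  next
    case outside
    have "avgop (\<lambda>x. indicator {a<..b} x * f x) s = 0"
      unfolding avgop_eq_integral_indicator
      by (rule integral_eq_zero_AE, rule AE_I2) (use outside in \<open>auto split: split_indicator\<close>)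
    then show ?thesis
      using outside M_nonneg by (auto split: split_indicator)
  next
    case boundary
    have "\<bar>indicator {a<..b} s * avgop f s\<bar> \<le> M"
      using abs_avgop_le[OF _ f_bound, where x = s] M_nonneg by (simp split: split_indicator)
    moreover have "\<bar>avgop (\<lambda>x. indicator {a<..b} x * f x) s\<bar> \<le> M"
      by (rule abs_avgop_le[OF _ restrict_bound]) simp
    ultimately show ?thesis
      using boundary M_nonneg by (auto split: split_indicator)
  qed
qed

definition window_norm :: "(real \<Rightarrow> real) \<Rightarrow> real \<Rightarrow> real" where
  "window_norm W a = (LBINT x:{a - 1..a + 1}. \<bar>W x\<bar>)"

lemma window_norm_nonneg: "0 \<le> window_norm W a"
  unfolding window_norm_def set_lebesgue_integral_def by (rule integral_nonneg_AE) auto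

lemma abs_set_integral_avgop_adjoint_Ioc_le:
  fixes W f :: "real \<Rightarrow> real"
  assumes [measurable]: "W \<in> borel_measurable borel"
    and W_int: "\<And>a b. set_integrable lborel {a..b} W"
    and [measurable]: "f \<in> borel_measurable borel" and f_bound: "\<And>x. \<bar>f x\<bar> \<le> M"
  shows "\<bar>(LBINT x:{a<..b}. W x * avgop f x) - (LBINT x:{a<..b}. f x * avgop W x)\<bar>
           \<le> 2 * M * (window_norm W a + window_norm W b)"
proof -
  have abs_W_int: "set_integrable lborel {c..d} (\<lambda>s. \<bar>W s\<bar>)" for c d
    using W_int by (rule set_integrable_abs)
  define f' where "f' x = indicator {a<..b} x * f x" for x
  have f'_bound: "\<bar>f' x\<bar> \<le> M" for x
    using f_bound[of x] order_trans[OF abs_ge_zero f_bound] by (simp add: f'_def split: split_indicator)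
  have f'_supp: "f' x = 0" if "x \<notin> {a..b}" for x
    using that by (simp add: f'_def)
  have f'_measurable [measurable]: "f' \<in> borel_measurable borel"
    unfolding f'_def by measurable
  note adjoint = avgop_adjoint_bounded_support[where a = a and b = b, OF _ W_int f'_measurable f'_bound f'_supp]
  define D where "D s = W s * (indicator {a<..b} s * avgop f s - avgop f' s)" for s
  define R where "R s = 2 * M * (indicator {a - 1..a + 1} s * \<bar>W s\<bar> + indicator {b - 1..b + 1} s * \<bar>W s\<bar>)" for s
  have D_bound: "\<bar>D s\<bar> \<le> R s" for s
  proof -
    have "\<bar>indicator {a<..b} s * avgop f s - avgop f' s\<bar>
            \<le> 2 * M * (indicator {a - 1..a + 1} s + indicator {b - 1..b + 1} s)"
      unfolding f'_def by (rule abs_avgop_restrict_Ioc_le[OF _ f_bound]) simp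
    from mult_left_mono[OF this abs_ge_zero[of "W s"]] show ?thesis
      unfolding D_def R_def abs_mult by (simp add: algebra_simps)
  qed
  have R_int: "integrable lborel R"
    using abs_W_int[of "a - 1" "a + 1"] abs_W_int[of "b - 1" "b + 1"]
    unfolding R_def by (simp add: set_integrable_def)
  note avgop_borel_measurable_bounded[OF _ f_bound, measurable]
    avgop_borel_measurable_bounded[OF f'_measurable f'_bound, measurable]
  have D_measurable [measurable]: "D \<in> borel_measurable borel"
    unfolding D_def by measurable
  have D_int: "integrable lborel D"
    by (rule Bochner_Integration.integrable_bound[OF R_int])
       (use D_bound in \<open>auto intro: order_trans[OF _ abs_ge_self]\<close>)
  have "(LBINT x:{a<..b}. W x * avgop f x) = (\<integral>s. W s * avgop f' s + D s \<partial>lborel)"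
    unfolding set_lebesgue_integral_def D_def by (rule Bochner_Integration.integral_cong) (auto simp: algebra_simps)
  also have "\<dots> = (\<integral>s. W s * avgop f' s \<partial>lborel) + (\<integral>s. D s \<partial>lborel)"
    by (rule Bochner_Integration.integral_add[OF adjoint(1) D_int]) simp
  also have "(\<integral>s. W s * avgop f' s \<partial>lborel) = (LBINT x:{a<..b}. f x * avgop W x)"
    using adjoint(2) unfolding f'_def set_lebesgue_integral_def by (simp add: mult.assoc)
  finally have "\<bar>(LBINT x:{a<..b}. W x * avgop f x) - (LBINT x:{a<..b}. f x * avgop W x)\<bar> \<le> (\<integral>s. R s \<partial>lborel)"
    using integral_abs_bound_integral[OF D_int R_int D_bound] by simp
  also have "(\<integral>s. R s \<partial>lborel) = 2 * M * (window_norm W a + window_norm W b)"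
    using abs_W_int[of "a - 1" "a + 1"] abs_W_int[of "b - 1" "b + 1"]
    by (simp add: R_def window_norm_def set_lebesgue_integral_def set_integrable_def)
  finally show ?thesis .
qed

lemma set_integral_mult_avgop_le_window_norm:
  fixes W h :: "real \<Rightarrow> real"
  assumes "W \<in> borel_measurable borel" and "\<And>a b. set_integrable lborel {a..b} W"
    and "h \<in> borel_measurable borel" and "\<And>x. \<bar>h x\<bar> \<le> M"
    and sign: "\<And>x. h x * avgop W x \<le> 0"
  shows "(LBINT x:{a<..b}. W x * avgop h x) \<le> 2 * M * (window_norm W a + window_norm W b)"
proof -
  have "(LBINT x:{a<..b}. h x * avgop W x) \<le> 0"
  proof -
    have "0 \<le> (\<integral>x. - (indicator {a<..b} x * (h x * avgop W x)) \<partial>lborel)"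
      using sign by (intro integral_nonneg_AE) (auto simp: mult_le_0_iff split: split_indicator)
    then show ?thesis
      unfolding set_lebesgue_integral_def by simp
  qed
  then show ?thesis
    using abs_set_integral_avgop_adjoint_Ioc_le[OF assms(1-4), of a b] by linarith
qed

section \<open>Periodic functions\<close>

lemma periodic_add_nat_mult:
  assumes "\<And>x. F (x + L) = F x"
  shows "F (x + real n * L) = F x"
proof (induction n)
  case (Suc n)
  then show ?case
    using assms[of "x + real n * L"] by (simp add: algebra_simps)
qed simp

lemma periodic_representative:
  fixes F :: "real \<Rightarrow> 'b"
  assumes periodic: "\<And>x. F (x + L) = F x" and "L > 0"
  obtains y where "y \<in> {a..a + L}" "F y = F x"
proof -
  define m where "m = \<lfloor>(x - a) / L\<rfloor>"
  have "real_of_int m \<le> (x - a) / L" "(x - a) / L < real_of_int m + 1"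
    unfolding m_def by linarith+
  then have "real_of_int m * L \<le> x - a" "x - a < (real_of_int m + 1) * L"
    using \<open>L > 0\<close> by (simp_all add: field_simps)
  then have "x - real_of_int m * L \<in> {a..a + L}"
    by (simp add: algebra_simps)
  moreover have "F (x - real_of_int m * L) = F x"
  proof (cases "m \<ge> 0")
    case True
    then show ?thesis
      using periodic_add_nat_mult[of F L, OF periodic, of "x - real_of_int m * L" "nat m"] by simp
  next
    case False
    then show ?thesis
      using periodic_add_nat_mult[of F L, OF periodic, of x "nat (- m)"] by simp
  qed
  ultimately show ?thesis
    using that by blast
qed

lemma set_integral_Icc_shift_periodic:
  fixes F :: "real \<Rightarrow> real"
  assumes "\<And>x. F (x + t) = F x"
  shows "(LBINT x:{a + t..b + t}. F x) = (LBINT x:{a..b}. F x)"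
proof -
  have "indicator {a + t..b + t} (t + x) * F (t + x) = indicator {a..b} x * F x" for x
    using assms[of x] by (auto simp: add.commute split: split_indicator)
  then show ?thesis
    unfolding set_lebesgue_integral_def
    using lborel_integral_real_affine[of 1 "\<lambda>x. indicator {a + t..b + t} x * F x" t] by simp
qed

lemma window_norm_periodic:
  assumes "\<And>x. W (x + L) = W x"
  shows "window_norm W (a + real n * L) = window_norm W a"
  using set_integral_Icc_shift_periodic[of "\<lambda>x. \<bar>W x\<bar>" "real n * L" "a - 1" "a + 1"]
    periodic_add_nat_mult[of W L, OF assms]
  by (simp add: window_norm_def algebra_simps)

lemma
  fixes F :: "real \<Rightarrow> real"
  assumes "\<And>x. F (x + t) = F x"
  shows set_integral_Ioc_shift_periodic: "(LBINT x:{a + t<..b + t}. F x) = (LBINT x:{a<..b}. F x)"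
    and set_integrable_Ioc_shift_periodic:
      "set_integrable lborel {a + t<..b + t} F \<longleftrightarrow> set_integrable lborel {a<..b} F"
proof -
  have shift: "indicator {a + t<..b + t} (t + x) * F (t + x) = indicator {a<..b} x * F x" for x
    using assms[of x] by (auto simp: add.commute split: split_indicator)
  show "(LBINT x:{a + t<..b + t}. F x) = (LBINT x:{a<..b}. F x)"
    unfolding set_lebesgue_integral_def
    using lborel_integral_real_affine[of 1 "\<lambda>x. indicator {a + t<..b + t} x * F x" t] by (simp add: shift)
  show "set_integrable lborel {a + t<..b + t} F \<longleftrightarrow> set_integrable lborel {a<..b} F"
    unfolding set_integrable_def
    using lborel_integrable_real_affine_iff[of 1 "\<lambda>x. indicator {a + t<..b + t} x * F x" t] by (simp add: shift)
qed

lemma set_integral_Ioc_periods: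
  fixes F :: "real \<Rightarrow> real"
  assumes periodic: "\<And>x. F (x + L) = F x" and "L > 0"
    and F_int: "set_integrable lborel {a<..a + L} F"
  shows "set_integrable lborel {a<..a + real n * L} F"
    and "(LBINT x:{a<..a + real n * L}. F x) = real n * (LBINT x:{a<..a + L}. F x)"
proof (induction n)
  case (Suc n)
  note periodic_n = periodic_add_nat_mult[of F L, OF periodic, of _ n]
  have "{a<..a + L + t} = {a<..a + t} \<union> {a + t<..a + L + t}" if "0 \<le> t" for t
    using that \<open>L > 0\<close> by auto
  from this[of "real n * L"] have split:
      "{a<..a + real (Suc n) * L} = {a<..a + real n * L} \<union> {a + real n * L<..a + L + real n * L}"
    using \<open>L > 0\<close> by (simp add: algebra_simps)
  have last_int: "set_integrable lborel {a + real n * L<..a + L + real n * L} F"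
    using set_integrable_Ioc_shift_periodic[of F, OF periodic_n] F_int by blast
  have last_eq: "(LBINT x:{a + real n * L<..a + L + real n * L}. F x) = (LBINT x:{a<..a + L}. F x)"
    by (rule set_integral_Ioc_shift_periodic[of F, OF periodic_n])
  case 1
  show ?case
    unfolding split by (rule set_integrable_Un[OF Suc.IH(1) last_int]) auto
  case 2
  have "(LBINT x:{a<..a + real (Suc n) * L}. F x)
      = (LBINT x:{a<..a + real n * L}. F x) + (LBINT x:{a + real n * L<..a + L + real n * L}. F x)"
    unfolding split by (rule set_integral_Un[OF _ Suc.IH(1) last_int]) auto
  also have "\<dots> = real n * (LBINT x:{a<..a + L}. F x) + (LBINT x:{a<..a + L}. F x)"
    by (simp only: Suc.IH(2) last_eq)
  finally show ?case
    by (simp add: algebra_simps)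
qed (simp_all add: set_lebesgue_integral_def)

lemma periodic_set_integrable_Icc:
  fixes F :: "real \<Rightarrow> real"
  assumes periodic: "\<And>x. F (x + L) = F x" and "L > 0"
    and F_int: "set_integrable lborel {a<..a + L} F"
  shows "set_integrable lborel {c..d} F"
proof -
  obtain N :: nat where "real N > (a - c) / L"
    using reals_Archimedean2 by blast
  define a' where "a' = a - real N * L"
  have "a' < c"
    using \<open>real N > (a - c) / L\<close> \<open>L > 0\<close> by (simp add: a'_def field_simps)
  obtain n :: nat where "real n > (d - a') / L"
    using reals_Archimedean2 by blast
  then have "d < a' + real n * L"
    using \<open>L > 0\<close> by (simp add: field_simps)
  have "set_integrable lborel {a' + real N * L<..a' + L + real N * L} F"
    using F_int by (simp add: a'_def algebra_simps)
  then have "set_integrable lborel {a'<..a' + L} F"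
    using set_integrable_Ioc_shift_periodic[of F, OF periodic_add_nat_mult[of F L, OF periodic]] by blast
  then have "set_integrable lborel {a'<..a' + real n * L} F"
    by (rule set_integral_Ioc_periods(1)[of F, OF periodic \<open>L > 0\<close>])
  then show ?thesis
    by (rule set_integrable_subset) (use \<open>a' < c\<close> \<open>d < a' + real n * L\<close> in auto)
qed

lemma avgop_periodic:
  fixes F :: "real \<Rightarrow> real"
  assumes "\<And>x. F (x + L) = F x"
  shows "avgop F (x + L) = avgop F x"
  using set_integral_Icc_shift_periodic[of F L, OF assms, of "x - 1/2" "x + 1/2"]
  by (simp add: avgop_def algebra_simps)

lemma continuous_le_if_AE_le_Ioc:
  fixes g :: "real \<Rightarrow> real"
  assumes "continuous_on UNIV g" and AE_le: "AE x in lborel. x \<in> {u<..v} \<longrightarrow> g x \<le> c"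
    and "u < v" and "x0 \<in> {u..v}"
  shows "g x0 \<le> c"
proof (rule ccontr)
  assume "\<not> g x0 \<le> c"
  moreover have "isCont g x0"
    using assms(1) by (simp add: continuous_on_eq_continuous_at)
  ultimately obtain \<delta> where "\<delta> > 0" and \<delta>: "\<And>y. dist y x0 < \<delta> \<Longrightarrow> dist (g y) (g x0) < g x0 - c"
    unfolding continuous_at_eps_delta by (metis diff_gt_0_iff_gt not_le)
  define l where "l = max u (x0 - \<delta>)"
  define r where "r = min v (x0 + \<delta>)"
  have "l < r"
    using \<open>u < v\<close> \<open>x0 \<in> {u..v}\<close> \<open>\<delta> > 0\<close> by (auto simp: l_def r_def)
  have big: "g y > c" if "y \<in> {l<..<r}" for y
  proof -
    have "\<bar>y - x0\<bar> < \<delta>"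
      using that by (auto simp: l_def r_def)
    then show ?thesis
      using \<delta>[of y] by (auto simp: dist_real_def)
  qed
  have "AE x in lborel. x \<notin> {l<..<r}"
    using AE_le by eventually_elim (use big in \<open>force simp: l_def r_def\<close>)
  then have "emeasure lborel {l<..<r} = 0"
    by (subst AE_iff_measurable[symmetric, of "{l<..<r}"]) auto
  then show False
    using \<open>l < r\<close> by simp
qed

section \<open>The nonlinearities\<close>

lemma Psi_borel_measurable [measurable]:
  assumes [measurable]: "g \<in> borel_measurable M"
  shows "(\<lambda>x. Psi r (g x)) \<in> borel_measurable M"
  unfolding Psi_def by measurable

lemma Psi_mult_self:
  fixes r u :: real
  assumes "r > 1"
  shows "Psi r u * u = r * \<bar>u\<bar> powr r"
proof (cases "u = 0")
  case False
  have "\<bar>u\<bar> powr (r - 1) * \<bar>u\<bar> = \<bar>u\<bar> powr r"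
    using False powr_add[of "\<bar>u\<bar>" "r - 1" 1] by simp
  then show ?thesis
    unfolding Psi_def by (metis abs_sgn mult.assoc mult.commute)
qed (use assms in \<open>simp add: Psi_def\<close>)

lemma abs_Psi_le:
  fixes r u c :: real
  assumes "r > 1" and "\<bar>u\<bar> \<le> c"
  shows "\<bar>Psi r u\<bar> \<le> r * c powr (r - 1)"
proof -
  have "\<bar>Psi r u\<bar> \<le> r * \<bar>u\<bar> powr (r - 1)"
    using assms unfolding Psi_def by (auto simp: abs_mult abs_sgn_eq)
  also have "\<dots> \<le> r * c powr (r - 1)"
    using assms by (intro mult_left_mono powr_mono2) auto
  finally show ?thesis .
qed

lemma Psi_diff_mult_self_nonpos:
  fixes p q u :: real
  assumes "1 < q" "q < p" and small: "\<bar>u\<bar> \<le> (q / p) powr (1 / (p - q))"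
  shows "(Psi p u - Psi q u) * u \<le> 0"
proof (cases "u = 0")
  case False
  have "\<bar>u\<bar> powr (p - q) \<le> ((q / p) powr (1 / (p - q))) powr (p - q)"
    using assms by (intro powr_mono2) auto
  also have "\<dots> = q / p"
    using assms by (simp add: powr_powr)
  finally have "p * \<bar>u\<bar> powr (p - q) \<le> q"
    using assms by (simp add: field_simps)
  moreover have "\<bar>u\<bar> powr p = \<bar>u\<bar> powr (p - q) * \<bar>u\<bar> powr q"
    using False by (simp add: powr_add[symmetric])
  ultimately have "p * \<bar>u\<bar> powr p \<le> q * \<bar>u\<bar> powr q"
    using mult_right_mono[of "p * \<bar>u\<bar> powr (p - q)" q "\<bar>u\<bar> powr q"] by (simp add: mult.assoc)
  then show ?thesis
    using Psi_mult_self[of p u] Psi_mult_self[of q u] assms by (simp add: left_diff_distrib)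
qed (simp add: Psi_def)

section \<open>Square integrable functions\<close>

lemma abs_le_eps_square:
  fixes w e :: real
  assumes "e > 0"
  shows "\<bar>w\<bar> \<le> e + w * w / (4 * e)"
proof -
  have "0 \<le> (\<bar>w\<bar> - 2 * e)\<^sup>2"
    by simp
  then have "4 * e * \<bar>w\<bar> \<le> 4 * e * (e + w * w / (4 * e))"
    using assms by (simp add: power2_eq_square algebra_simps)
  then show ?thesis
    using assms by simp
qed

lemma set_integrable_Int_Icc_if_square:
  fixes W :: "real \<Rightarrow> real"
  assumes [measurable]: "W \<in> borel_measurable borel" and [measurable]: "S \<in> sets borel"
    and W2_int: "set_integrable lborel S (\<lambda>x. W x * W x)"
  shows "set_integrable lborel (S \<inter> {a..b}) W"
proof (rule set_integrable_bound[of _ _ "\<lambda>x. 1 + W x * W x"])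
  show "set_integrable lborel (S \<inter> {a..b}) (\<lambda>x. 1 + W x * W x)"
    using set_integrable_subset[OF W2_int, of "S \<inter> {a..b}"]
      set_integrable_subset[OF borel_integrable_atLeastAtMost'[of a b "\<lambda>_. 1::real"], of "S \<inter> {a..b}"]
    by (intro set_integral_add) auto
  have "\<bar>w\<bar> \<le> 1 + w * w" for w :: real
    using abs_le_eps_square[of "1/2" w] by simp
  then show "AE x in lborel. x \<in> S \<inter> {a..b} \<longrightarrow> norm (W x) \<le> norm (1 + W x * W x)"
    by (auto intro: order_trans[OF _ abs_ge_self])
qed (simp add: set_borel_measurable_def)

lemma AE_zero_if_set_integral_square_nonpos:
  fixes W :: "real \<Rightarrow> real"
  assumes "S \<in> sets borel" and W2_int: "set_integrable lborel S (\<lambda>x. W x * W x)"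
    and nonpos: "(LBINT x:S. W x * W x) \<le> 0"
  shows "AE x in lborel. x \<in> S \<longrightarrow> W x = 0"
proof -
  have int: "integrable lborel (\<lambda>x. indicator S x * (W x * W x))"
    using W2_int by (simp add: set_integrable_def)
  have "(\<integral>x. indicator S x * (W x * W x) \<partial>lborel) \<le> 0"
    using nonpos by (simp add: set_lebesgue_integral_def)
  moreover have "0 \<le> (\<integral>x. indicator S x * (W x * W x) \<partial>lborel)"
    by (rule integral_nonneg_AE) auto
  ultimately have "(\<integral>x. indicator S x * (W x * W x) \<partial>lborel) = 0"
    by (rule antisym)
  then have "AE x in lborel. indicator S x * (W x * W x) = 0"
    by (subst integral_nonneg_eq_0_iff_AE[OF int, symmetric]) auto
  then show ?thesis
    by eventually_elim (auto split: split_indicator)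
qed

lemma window_norm_le:
  fixes W :: "real \<Rightarrow> real"
  assumes [measurable]: "W \<in> borel_measurable borel"
    and W2_int: "set_integrable lborel {a - 1..a + 1} (\<lambda>x. W x * W x)" and "e > 0"
  shows "window_norm W a \<le> 2 * e + (LBINT x:{a - 1..a + 1}. W x * W x) / (4 * e)"
proof -
  have W_int: "set_integrable lborel {a - 1..a + 1} W"
    using set_integrable_Int_Icc_if_square[OF _ _ W2_int, of "a - 1" "a + 1"] by simp
  have const_int: "set_integrable lborel {a - 1..a + 1} (\<lambda>_. e)"
    by (simp add: borel_integrable_atLeastAtMost')
  have "window_norm W a \<le> (LBINT x:{a - 1..a + 1}. e + W x * W x / (4 * e))"
    unfolding window_norm_def
    by (rule set_integral_mono[OF set_integrable_abs[OF W_int]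
          set_integral_add(1)[OF const_int set_integrable_divide[OF W2_int]]])
       (rule abs_le_eps_square[OF \<open>e > 0\<close>])
  also have "\<dots> = 2 * e + (LBINT x:{a - 1..a + 1}. W x * W x) / (4 * e)"
    using set_integral_add(2)[OF const_int set_integrable_divide[OF W2_int]]
    by (simp add: set_lebesgue_integral_def measure_def)
  finally show ?thesis .
qed

lemma tendsto_set_integral_symmetric_Ioc:
  fixes f :: "real \<Rightarrow> real"
  assumes [measurable]: "integrable lborel f"
  shows "(\<lambda>n. LBINT x:{- real n<..real n}. f x) \<longlonglongrightarrow> (\<integral>x. f x \<partial>lborel)"
  unfolding set_lebesgue_integral_def
proof (rule integral_dominated_convergence[where w = "\<lambda>x. norm (f x)"])
  show "AE x in lborel. (\<lambda>n. indicator {- real n<..real n} x *\<^sub>R f x) \<longlonglongrightarrow> f x"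
  proof
    fix x
    obtain N :: nat where "\<bar>x\<bar> < real N"
      using reals_Archimedean2 by blast
    then have "eventually (\<lambda>n. indicator {- real n<..real n} x *\<^sub>R f x = f x) sequentially"
      unfolding eventually_sequentially by (intro exI[of _ N]) (auto split: split_indicator)
    then show "(\<lambda>n. indicator {- real n<..real n} x *\<^sub>R f x) \<longlonglongrightarrow> f x"
      by (rule tendsto_eventually)
  qed
  show "AE x in lborel. norm (indicator {- real n<..real n} x *\<^sub>R f x) \<le> norm (f x)" for n
    by (auto split: split_indicator)
qed (use assms in auto)

lemma window_square_integral_tendsto_0:
  fixes W :: "real \<Rightarrow> real" and a :: "nat \<Rightarrow> real"
  assumes W2_int: "integrable lborel (\<lambda>x. W x * W x)"
    and a: "filterlim (\<lambda>n. \<bar>a n\<bar>) at_top sequentially"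
  shows "(\<lambda>n. LBINT x:{a n - 1..a n + 1}. W x * W x) \<longlonglongrightarrow> 0"
proof -
  have "(\<lambda>n. \<integral>x. indicator {a n - 1..a n + 1} x *\<^sub>R (W x * W x) \<partial>lborel) \<longlonglongrightarrow> (\<integral>x. 0 \<partial>(lborel :: real measure))"
  proof (rule integral_dominated_convergence[where w = "\<lambda>x. W x * W x"])
    show "AE x in lborel. (\<lambda>n. indicator {a n - 1..a n + 1} x *\<^sub>R (W x * W x)) \<longlonglongrightarrow> 0"
    proof
      fix x
      have "eventually (\<lambda>n. \<bar>x\<bar> + 1 < \<bar>a n\<bar>) sequentially"
        using a by (simp add: filterlim_at_top_dense)
      then have "eventually (\<lambda>n. indicator {a n - 1..a n + 1} x *\<^sub>R (W x * W x) = 0) sequentially"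
        by eventually_elim (auto split: split_indicator)
      then show "(\<lambda>n. indicator {a n - 1..a n + 1} x *\<^sub>R (W x * W x)) \<longlonglongrightarrow> 0"
        by (rule tendsto_eventually)
    qed
    show "AE x in lborel. norm (indicator {a n - 1..a n + 1} x *\<^sub>R (W x * W x)) \<le> W x * W x" for n
      by (auto split: split_indicator)
  qed (use W2_int in auto)
  then show ?thesis
    by (simp add: set_lebesgue_integral_def)
qed

lemma window_norm_tendsto_0:
  fixes W :: "real \<Rightarrow> real" and a :: "nat \<Rightarrow> real"
  assumes [measurable]: "W \<in> borel_measurable borel" and W2_int: "integrable lborel (\<lambda>x. W x * W x)"
    and "filterlim (\<lambda>n. \<bar>a n\<bar>) at_top sequentially"
  shows "(\<lambda>n. window_norm W (a n)) \<longlonglongrightarrow> 0"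
proof (rule order_tendstoI)
  show "eventually (\<lambda>n. y < window_norm W (a n)) sequentially" if "y < 0" for y
    by (intro always_eventually allI order.strict_trans2[OF that window_norm_nonneg])
next
  fix y :: real
  assume "y > 0"
  define e where "e = y / 4"
  have "e > 0"
    using \<open>y > 0\<close> by (simp add: e_def)
  have "eventually (\<lambda>n. (LBINT x:{a n - 1..a n + 1}. W x * W x) < 4 * e * e) sequentially"
    using window_square_integral_tendsto_0[OF W2_int assms(3)] by (rule order_tendstoD) (use \<open>e > 0\<close> in simp)
  then show "eventually (\<lambda>n. window_norm W (a n) < y) sequentially"
  proof eventually_elim
    case (elim n)
    have "set_integrable lborel {a n - 1..a n + 1} (\<lambda>x. W x * W x)"
      using W2_int unfolding set_integrable_def by (intro integrable_mult_indicator) auto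
    then have "window_norm W (a n) \<le> 2 * e + (LBINT x:{a n - 1..a n + 1}. W x * W x) / (4 * e)"
      using window_norm_le[OF _ _ \<open>e > 0\<close>] by simp
    also have "\<dots> < 3 * e"
      using elim \<open>e > 0\<close> by (simp add: field_simps)
    finally show ?case
      using \<open>e > 0\<close> by (simp add: e_def)
  qed
qed

section \<open>Vanishing under the sign condition\<close>

lemma AE_zero_if_avgop_sign_line:
  fixes W h :: "real \<Rightarrow> real"
  assumes [measurable]: "W \<in> borel_measurable borel" and W2_int: "integrable lborel (\<lambda>x. W x * W x)"
    and [measurable]: "h \<in> borel_measurable borel" and h_bound: "\<And>x. \<bar>h x\<bar> \<le> M"
    and sign: "\<And>x. h x * avgop W x \<le> 0" and "s > 0"
    and eq: "AE x in lborel. W x * avgop h x = s * (W x * W x)"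
  shows "AE x in lborel. W x = 0"
proof -
  have W_int: "set_integrable lborel {a..b} W" for a b
    using set_integrable_Int_Icc_if_square[of W UNIV] W2_int by (simp add: set_integrable_def)
  note avgop_borel_measurable_bounded[OF _ h_bound, measurable]
  let ?I = "\<lambda>n::nat. LBINT x:{- real n<..real n}. W x * W x"
  let ?B = "\<lambda>n::nat. 2 * M * (window_norm W (- real n) + window_norm W (real n))"
  have "(LBINT x:{- real n<..real n}. W x * avgop h x) = (LBINT x:{- real n<..real n}. s * (W x * W x))" for n
    by (rule set_lebesgue_integral_cong_AE) (use eq in auto)
  then have "s * ?I n \<le> ?B n" for n
    using set_integral_mult_avgop_le_window_norm[OF _ W_int _ h_bound sign, of "- real n" "real n"]
    by simp
  moreover have "(\<lambda>n. s * ?I n) \<longlonglongrightarrow> s * (\<integral>x. W x * W x \<partial>lborel)"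
    by (intro tendsto_mult_left tendsto_set_integral_symmetric_Ioc W2_int)
  moreover have "?B \<longlonglongrightarrow> 2 * M * (0 + 0)"
    using filterlim_real_sequentially
    by (intro tendsto_intros window_norm_tendsto_0[OF _ W2_int]) simp_all
  ultimately have "s * (\<integral>x. W x * W x \<partial>lborel) \<le> 0"
    using LIMSEQ_le by fastforce
  then have "(LBINT x:UNIV. W x * W x) \<le> 0"
    using \<open>s > 0\<close> by (simp add: mult_le_0_iff set_lebesgue_integral_def)
  then show ?thesis
    using AE_zero_if_set_integral_square_nonpos[of UNIV W] W2_int by (simp add: set_integrable_def)
qed

lemma AE_zero_if_avgop_sign_periodic:
  fixes W h :: "real \<Rightarrow> real"
  assumes [measurable]: "W \<in> borel_measurable borel" and W_periodic: "\<And>x. W (x + L) = W x" and "L > 0"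
    and W2_int: "set_integrable lborel {a<..a + L} (\<lambda>x. W x * W x)"
    and [measurable]: "h \<in> borel_measurable borel" and h_bound: "\<And>x. \<bar>h x\<bar> \<le> M"
    and h_periodic: "\<And>x. h (x + L) = h x"
    and sign: "\<And>x. h x * avgop W x \<le> 0" and "s > 0"
    and eq: "AE x in lborel. x \<in> {a<..a + L} \<longrightarrow> W x * avgop h x = s * (W x * W x)"
  shows "AE x in lborel. x \<in> {a<..a + L} \<longrightarrow> W x = 0"
proof -
  have "set_integrable lborel ({a<..a + L} \<inter> {a..a + L}) W"
    by (rule set_integrable_Int_Icc_if_square[OF _ _ W2_int]) simp_all
  then have W_int: "set_integrable lborel {c..d} W" for c d
    by (intro periodic_set_integrable_Icc[of W, OF W_periodic \<open>L > 0\<close>]) (simp add: Int_absorb2 subset_eq)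
  note avgop_borel_measurable_bounded[OF _ h_bound, measurable]
  define G where "G x = W x * avgop h x" for x
  have G_periodic: "G (x + L) = G x" for x
    unfolding G_def using W_periodic avgop_periodic[of h, OF h_periodic] by simp
  have "set_integrable lborel {a<..a + L} W"
    by (rule set_integrable_subset[OF W_int[of a "a + L"]]) auto
  from set_integrable_mult_avgop_bounded[OF _ _ this _ h_bound]
  have G_int: "set_integrable lborel {a<..a + L} G"
    unfolding G_def by simp
  define J where "J = (LBINT x:{a<..a + L}. W x * W x)"
  have "(LBINT x:{a<..a + L}. G x) = (LBINT x:{a<..a + L}. s * (W x * W x))"
    unfolding G_def by (rule set_lebesgue_integral_cong_AE) (use eq in auto)
  then have "(LBINT x:{a<..a + real n * L}. G x) = real n * (s * J)" for n
    using set_integral_Ioc_periods(2)[of G, OF G_periodic \<open>L > 0\<close> G_int] by (simp add: J_def)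
  then have "real n * (s * J) \<le> 4 * M * window_norm W a" for n
    using set_integral_mult_avgop_le_window_norm[OF _ W_int _ h_bound sign, of a "a + real n * L"]
      window_norm_periodic[of W L, OF W_periodic]
    by (simp add: G_def)
  then have "s * J \<le> 0"
    by (metis not_le reals_Archimedean3)
  then show ?thesis
    using \<open>s > 0\<close> by (intro AE_zero_if_set_integral_square_nonpos[OF _ W2_int])
      (simp_all add: J_def mult_le_0_iff)
qed

section \<open>The spaces X_K\<close>

lemma IK_cases:
  assumes "K > 0"
  obtains "K = \<infinity>" "IK K = UNIV"
    | k where "K = ereal k" "k > 0" "IK K = {- k<..k}"
  using assms by (cases K) (auto simp: IK_def)

lemma IK_sets [measurable]: "IK K \<in> sets borel"
  by (simp add: IK_def)

lemma XK_borel_measurable [measurable_dest]: "XK p q K W \<Longrightarrow> W \<in> borel_measurable borel"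
  by (simp add: XK_def)

lemma XK_periodic: "XK p q K W \<Longrightarrow> K = ereal k \<Longrightarrow> W (x + 2 * k) = W x"
  by (simp add: XK_def)

lemma XK_set_integrable_square: "XK p q K W \<Longrightarrow> set_integrable lborel (IK K) (\<lambda>x. W x * W x)"
  by (simp add: XK_def Lp_on_def set_integrable_def integrable_restrict_space power2_eq_square)

lemma XK_set_integrable_Icc:
  assumes "K > 0" and X: "XK p q K W"
  shows "set_integrable lborel {a..b} W"
  using assms(1)
proof (cases rule: IK_cases)
  case 1
  then show ?thesis
    using set_integrable_Int_Icc_if_square[OF _ _ XK_set_integrable_square[OF X]] X by simp
next
  case (2 k)
  have "set_integrable lborel ({- k<..k} \<inter> {- k..k}) W"
    using set_integrable_Int_Icc_if_square[OF _ _ XK_set_integrable_square[OF X]] X 2 by simp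
  then have period_int: "set_integrable lborel {- k<..- k + 2 * k} W"
    by (simp add: Int_absorb2 subset_eq)
  show ?thesis
    by (rule periodic_set_integrable_Icc[OF XK_periodic[OF X \<open>K = ereal k\<close>] _ period_int])
       (use \<open>k > 0\<close> in simp)
qed

lemma XK_abs_avgop_le:
  assumes "K > 0" and X: "XK p q K W" and sup_le: "sup_norm_on (IK K) (avgop W) \<le> ereal c"
  shows "\<bar>avgop W x\<bar> \<le> c"
proof -
  from esssup_AE[of "\<lambda>y. ereal \<bar>avgop W y\<bar>" "restrict_space lborel (IK K)"]
  have "AE y in restrict_space lborel (IK K). \<bar>avgop W y\<bar> \<le> c"
  proof eventually_elim
    case (elim y)
    then show ?case
      using sup_le unfolding sup_norm_on_def by (metis ereal_less_eq(3) order_trans)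
  qed
  then have AE_le: "AE y in lborel. y \<in> IK K \<longrightarrow> \<bar>avgop W y\<bar> \<le> c"
    by (simp add: AE_restrict_space_iff)
  have cont: "continuous_on UNIV (\<lambda>y. \<bar>avgop W y\<bar>)"
    using continuous_on_avgop[OF XK_set_integrable_Icc[OF assms(1,2)]] by (intro continuous_intros)
  from assms(1) show ?thesis
  proof (cases rule: IK_cases)
    case 1
    then show ?thesis
      by (intro continuous_le_if_AE_le_Ioc[OF cont, of "x - 1" "x + 1"]) (use AE_le in auto)
  next
    case (2 k)
    have "avgop W (y + 2 * k) = avgop W y" for y
      using avgop_periodic[of W "2 * k"] XK_periodic[OF X \<open>K = ereal k\<close>] by blast
    then obtain y where "y \<in> {- k..- k + 2 * k}" "avgop W y = avgop W x"
      using periodic_representative[of "avgop W" "2 * k"] \<open>k > 0\<close> by (metis mult_pos_pos zero_less_numeral)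
    then show ?thesis
      using continuous_le_if_AE_le_Ioc[OF cont, of "- k" k c y] AE_le 2 by simp
  qed
qed

lemma XK_AE_zero_if_avgop_sign:
  fixes W h :: "real \<Rightarrow> real"
  assumes "K > 0" and X: "XK p q K W"
    and [measurable]: "h \<in> borel_measurable borel" and h_bound: "\<And>x. \<bar>h x\<bar> \<le> M"
    and h_periodic: "\<And>k x. K = ereal k \<Longrightarrow> h (x + 2 * k) = h x"
    and sign: "\<And>x. h x * avgop W x \<le> 0" and "s > 0"
    and eq: "AE x in restrict_space lborel (IK K). W x * avgop h x = s * (W x * W x)"
  shows "AE x in restrict_space lborel (IK K). W x = 0"
proof -
  have eq': "AE x in lborel. x \<in> IK K \<longrightarrow> W x * avgop h x = s * (W x * W x)"
    using eq by (simp add: AE_restrict_space_iff)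
  note W2_int = XK_set_integrable_square[OF X]
  from \<open>K > 0\<close> have "AE x in lborel. x \<in> IK K \<longrightarrow> W x = 0"
  proof (cases rule: IK_cases)
    case 1
    then show ?thesis
      using AE_zero_if_avgop_sign_line[OF _ _ _ h_bound sign \<open>s > 0\<close>] W2_int eq' X
      by (simp add: set_integrable_def)
  next
    case (2 k)
    then show ?thesis
      using AE_zero_if_avgop_sign_periodic[OF _ XK_periodic[OF X \<open>K = ereal k\<close>] _ _ _ h_bound
          h_periodic[OF \<open>K = ereal k\<close>] sign \<open>s > 0\<close>, of "- k"] W2_int eq' X
      by simp
  qed
  then show ?thesis
    by (simp add: AE_restrict_space_iff)
qed

lemma XK_AE_zero_if_abs_avgop_le:
  fixes p q s :: real
  assumes "1 < q" "q < p" "K > 0" and X: "XK p q K W"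
    and small: "\<And>x. \<bar>avgop W x\<bar> \<le> (q / p) powr (1 / (p - q))" and "s > 0"
    and eq: "AE x in restrict_space lborel (IK K).
               s * W x + avgop (\<lambda>y. Psi q (avgop W y)) x = avgop (\<lambda>y. Psi p (avgop W y)) x"
  shows "AE x in restrict_space lborel (IK K). W x = 0"
proof -
  let ?c = "(q / p) powr (1 / (p - q))"
  note W_int = XK_set_integrable_Icc[OF \<open>K > 0\<close> X]
  have Psi_bound: "\<bar>Psi r (avgop W x)\<bar> \<le> r * ?c powr (r - 1)" if "r > 1" for r x
    using abs_Psi_le[OF that small] .
  have Psi_int: "set_integrable lborel {a..b} (\<lambda>y. Psi r (avgop W y))" if "r > 1" for r a b
    using set_integrable_bounded_Icc[OF _ Psi_bound[OF that]] W_int by simp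
  define h where "h y = Psi p (avgop W y) - Psi q (avgop W y)" for y
  show ?thesis
  proof (rule XK_AE_zero_if_avgop_sign[OF \<open>K > 0\<close> X _ _ _ _ \<open>s > 0\<close>])
    show "h \<in> borel_measurable borel"
      using W_int X unfolding h_def by simp
    show "\<bar>h x\<bar> \<le> p * ?c powr (p - 1) + q * ?c powr (q - 1)" for x
      using Psi_bound[of p x] Psi_bound[of q x] assms unfolding h_def by simp
    show "h (x + 2 * k) = h x" if "K = ereal k" for k x
      using avgop_periodic[of W "2 * k"] XK_periodic[OF X that] unfolding h_def by metis
    show "h x * avgop W x \<le> 0" for x
      unfolding h_def using Psi_diff_mult_self_nonpos[OF assms(1,2) small] .
    have avgop_h: "avgop h x = avgop (\<lambda>y. Psi p (avgop W y)) x - avgop (\<lambda>y. Psi q (avgop W y)) x" for x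
      unfolding h_def using Psi_int assms by (intro avgop_diff) auto
    show "AE x in restrict_space lborel (IK K). W x * avgop h x = s * (W x * W x)"
      using eq
    proof eventually_elim
      case (elim x)
      then have "avgop h x = s * W x"
        by (simp add: avgop_h)
      then show ?case
        by simp
    qed
  qed
qed

theorem mainTheorem8:
  fixes p q :: real
  assumes "p > 2" and "1 < q" and "q < p"
  shows "\<exists>c>0. \<forall>(\<sigma>::real) (K::ereal) (W::real \<Rightarrow> real).
           \<sigma>\<^sup>2 > 0 \<longrightarrow> K > 0 \<longrightarrow> XK p q K W
           \<longrightarrow> \<not> (AE x in restrict_space lborel (IK K). W x = 0)
           \<longrightarrow> (AE x in restrict_space lborel (IK K).
                 \<sigma>\<^sup>2 * W x + avgop (\<lambda>y. Psi q (avgop W y)) x = avgop (\<lambda>y. Psi p (avgop W y)) x)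
           \<longrightarrow> sup_norm_on (IK K) (avgop W) \<ge> ereal c"
proof (intro exI[of _ "(q / p) powr (1 / (p - q))"] conjI allI impI)
  show "(q / p) powr (1 / (p - q)) > 0"
    using assms by simp
  fix \<sigma> :: real and K :: ereal and W :: "real \<Rightarrow> real"
  assume "\<sigma>\<^sup>2 > 0" "K > 0" "XK p q K W"
    and nonzero: "\<not> (AE x in restrict_space lborel (IK K). W x = 0)"
    and "AE x in restrict_space lborel (IK K).
           \<sigma>\<^sup>2 * W x + avgop (\<lambda>y. Psi q (avgop W y)) x = avgop (\<lambda>y. Psi p (avgop W y)) x"
  show "sup_norm_on (IK K) (avgop W) \<ge> ereal ((q / p) powr (1 / (p - q)))"
  proof (rule ccontr)
    assume "\<not> sup_norm_on (IK K) (avgop W) \<ge> ereal ((q / p) powr (1 / (p - q)))"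
    then have "\<bar>avgop W x\<bar> \<le> (q / p) powr (1 / (p - q))" for x
      using XK_abs_avgop_le[OF \<open>K > 0\<close> \<open>XK p q K W\<close>] by simp
    then have "AE x in restrict_space lborel (IK K). W x = 0"
      using XK_AE_zero_if_abs_avgop_le[OF assms(2,3) \<open>K > 0\<close> \<open>XK p q K W\<close>] \<open>\<sigma>\<^sup>2 > 0\<close> \<open>AE x in _. _\<close>
      by blast
    with nonzero show False ..
  qed
qed

end
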